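(* Let $\mathcal{H}$ be a Hilbert space, $0<\mu<1$, and let $A\ge0$ and $B$ be bounded operators on $\mathcal{H}$ satisfying $[B,B^*]=(1-\mu)A$ and $A+B^*B=1$. Then $\ker(B)=\{0\}$ if and only if $A=0$.
   Context: $[B,B^*]=BB^*-B^*B$; $A\ge 0$ means $A$ is a positive operator. *)

theory Defs
  imports "HOL-Analysis.Analysis"
begin

text \<open>A complex Hilbert space is modelled as a real Hilbert space
  (type class real_inner + complete_space) carrying a complex structure J
  (multiplication by the imaginary unit): J is real-linear, J(Jx) = -x, and J is
  orthogonal.  The complex inner product (linear in the second argument) is
  recovered as  cinner J x y = inner x y - i * inner (J x) y.\<close>

definition complex_structure :: "('a::real_inner \<Rightarrow> 'a) \<Rightarrow> bool" where
  "complex_structure J \<longleftrightarrow> linear J \<and> (\<forall>x. J (J x) = - x)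
      \<and> (\<forall>x y. inner (J x) (J y) = inner x y)"

definition cinner :: "('a::real_inner \<Rightarrow> 'a) \<Rightarrow> 'a \<Rightarrow> 'a \<Rightarrow> complex" where
  "cinner J x y = Complex (inner x y) (- inner (J x) y)"

definition bounded_op :: "('a::real_inner \<Rightarrow> 'a) \<Rightarrow> ('a \<Rightarrow> 'a) \<Rightarrow> bool" where
  "bounded_op J T \<longleftrightarrow> bounded_linear T \<and> (\<forall>x. T (J x) = J (T x))"

definition is_adjoint :: "('a::real_inner \<Rightarrow> 'a) \<Rightarrow> ('a \<Rightarrow> 'a) \<Rightarrow> ('a \<Rightarrow> 'a) \<Rightarrow> bool" where
  "is_adjoint J T T' \<longleftrightarrow> (\<forall>x y. cinner J (T x) y = cinner J x (T' y))"

definition positive_op :: "('a::real_inner \<Rightarrow> 'a) \<Rightarrow> ('a \<Rightarrow> 'a) \<Rightarrow> bool" where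
  "positive_op J A \<longleftrightarrow> (\<forall>x. Im (cinner J (A x) x) = 0 \<and> Re (cinner J (A x) x) \<ge> 0)"

end

theory Submission
  imports Defs
begin

text \<open>If \<open>ker B = 0\<close>, then \<open>B\<^sup>*\<close> has dense range and is bounded below
  (\<open>\<parallel>B\<^sup>*w\<parallel>\<^sup>2 = \<parallel>w\<parallel>\<^sup>2 - \<mu>\<langle>Aw,w\<rangle> \<ge> (1 - \<mu>)\<parallel>w\<parallel>\<^sup>2\<close>), hence surjective.
  Since \<open>\<langle>AB\<^sup>*w,B\<^sup>*w\<rangle> = \<mu>\<langle>Aw,w\<rangle> - \<mu>\<^sup>2\<parallel>Aw\<parallel>\<^sup>2\<close>, Cauchy--Schwarz turns a bound
  \<open>A \<le> \<rho>\<close> into \<open>A \<le> \<mu>\<rho>\<close> on the range of \<open>B\<^sup>*\<close>, i.e. everywhere; starting from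
  \<open>A \<le> 1\<close> this gives \<open>A \<le> \<mu>\<^sup>n\<close> for all \<open>n\<close>, so \<open>A = 0\<close>.  Conversely \<open>A = 0\<close> means
  \<open>B\<^sup>*B = 1\<close>.  Only real parts of inner products enter.\<close>

lemma near_minimizers_close:
  fixes y u w :: "'a::real_inner"
  assumes "d \<le> (norm (y - (1/2) *\<^sub>R (u + w)))\<^sup>2"
    and "(norm (y - u))\<^sup>2 \<le> d + e" and "(norm (y - w))\<^sup>2 \<le> d + f"
  shows "(norm (u - w))\<^sup>2 \<le> 2 * e + 2 * f"
proof -
  have "(norm (u - w))\<^sup>2 + 4 * (norm (y - (1/2) *\<^sub>R (u + w)))\<^sup>2
      = 2 * (norm (y - u))\<^sup>2 + 2 * (norm (y - w))\<^sup>2"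
    by (simp add: power2_norm_eq_inner inner_add_left inner_add_right inner_diff_left
        inner_diff_right inner_commute algebra_simps)
  with assms show ?thesis by linarith
qed

lemma nearest_image_orthogonal:
  fixes C :: "'a::real_vector \<Rightarrow> 'b::real_inner"
  assumes "linear C" and nearest: "\<And>z'. norm (y - C z) \<le> norm (y - C z')"
  shows "inner (y - C z) (C v) = 0"
proof -
  interpret C: linear C by fact
  define e p V where "e = y - C z" and "p = inner e (C v)" and "V = (norm (C v))\<^sup>2"
  have descent: "2 * t * p \<le> t\<^sup>2 * V" for t
  proof -
    have "(norm e)\<^sup>2 \<le> (norm (e - t *\<^sub>R C v))\<^sup>2"
      using nearest[of "z + t *\<^sub>R v"] unfolding e_def
      by (simp add: C.add C.scale algebra_simps)
    also have "\<dots> = (norm e)\<^sup>2 - 2 * t * p + t\<^sup>2 * V"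
      unfolding p_def V_def power2_norm_eq_inner
      by (simp add: inner_diff_left inner_diff_right inner_commute power2_eq_square algebra_simps)
    finally show ?thesis by simp
  qed
  have "p = 0"
  proof (cases "V = 0")
    case True
    thus ?thesis by (simp add: p_def V_def)
  next
    case False
    hence "V > 0" by (simp add: V_def)
    with descent[of "p / V"] have "p\<^sup>2 / V \<le> 0"
      by (simp add: field_simps power2_eq_square)
    with \<open>V > 0\<close> show ?thesis by (simp add: divide_le_0_iff)
  qed
  thus ?thesis by (simp add: p_def e_def)
qed

lemma bounded_below_minimizing_sequence_Cauchy:
  fixes C :: "'a::real_normed_vector \<Rightarrow> 'b::real_inner"
  assumes "linear C" and "c > 0" and below: "\<And>z. c * norm z \<le> norm (C z)"
    and d_le: "\<And>z. d \<le> (norm (y - C z))\<^sup>2"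
    and zs: "\<And>n. (norm (y - C (zs n)))\<^sup>2 \<le> d + 1 / real (Suc n)"
  shows "Cauchy zs"
proof (rule CauchyI)
  interpret C: linear C by fact
  have images_close: "(norm (C (zs m - zs n)))\<^sup>2 \<le> 2 / real (Suc m) + 2 / real (Suc n)" for m n
  proof -
    have "C ((1/2) *\<^sub>R (zs m + zs n)) = (1/2) *\<^sub>R (C (zs m) + C (zs n))"
      by (simp add: C.add C.scale)
    hence "(norm (C (zs m) - C (zs n)))\<^sup>2 \<le> 2 * (1 / real (Suc m)) + 2 * (1 / real (Suc n))"
      using d_le[of "(1/2) *\<^sub>R (zs m + zs n)"] zs[of m] zs[of n]
      by (intro near_minimizers_close) simp_all
    thus ?thesis by (simp add: C.diff)
  qed
  fix e :: real assume "e > 0"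
  obtain M :: nat where M: "4 / (c * e)\<^sup>2 < real M" using reals_Archimedean2 by blast
  have "norm (zs m - zs n) < e" if "m \<ge> M" "n \<ge> M" for m n
  proof -
    have "(c * norm (zs m - zs n))\<^sup>2 \<le> (norm (C (zs m - zs n)))\<^sup>2"
      using below \<open>c > 0\<close> by (simp add: power_mono)
    also have "\<dots> \<le> 2 / real (Suc M) + 2 / real (Suc M)"
      using images_close[of m n] that
        frac_le[of 2 2 "real (Suc M)" "real (Suc m)"] frac_le[of 2 2 "real (Suc M)" "real (Suc n)"]
      by simp
    also have "\<dots> = 4 / real (Suc M)" by simp
    also have "\<dots> < (c * e)\<^sup>2"
    proof -
      have pos: "(c * e)\<^sup>2 > 0" using \<open>c > 0\<close> \<open>e > 0\<close> by simp
      with M have "4 < real M * (c * e)\<^sup>2" by (simp add: divide_less_eq)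
      with pos have "4 < real (Suc M) * (c * e)\<^sup>2"
        unfolding of_nat_Suc distrib_right by linarith
      thus ?thesis by (simp add: divide_less_eq mult.commute)
    qed
    finally have "c * norm (zs m - zs n) < c * e"
      using \<open>c > 0\<close> \<open>e > 0\<close> by (simp add: power_less_imp_less_base)
    thus ?thesis using \<open>c > 0\<close> by simp
  qed
  thus "\<exists>M. \<forall>m\<ge>M. \<forall>n\<ge>M. norm (zs m - zs n) < e" by blast
qed

lemma bounded_below_nearest_image_exists:
  fixes C :: "'a::{real_normed_vector, complete_space} \<Rightarrow> 'b::real_inner"
  assumes "bounded_linear C" and "c > 0" and "\<And>z. c * norm z \<le> norm (C z)"
  obtains z where "\<And>z'. norm (y - C z) \<le> norm (y - C z')"
proof -
  interpret C: bounded_linear C by fact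
  define d where "d = (INF z. (norm (y - C z))\<^sup>2)"
  have bdd: "bdd_below (range (\<lambda>z. (norm (y - C z))\<^sup>2))"
    by (rule bdd_belowI2[of _ 0]) simp
  have d_le: "d \<le> (norm (y - C z))\<^sup>2" for z
    unfolding d_def using bdd by (rule cINF_lower) simp
  have "\<exists>z. (norm (y - C z))\<^sup>2 < d + 1 / real (Suc n)" for n
    using cINF_less_iff[OF UNIV_not_empty bdd, of "d + 1 / real (Suc n)"] by (simp add: d_def)
  then obtain zs where zs: "\<And>n. (norm (y - C (zs n)))\<^sup>2 \<le> d + 1 / real (Suc n)"
    by (metis less_imp_le)
  have "Cauchy zs"
    using C.linear assms(2,3) d_le zs by (rule bounded_below_minimizing_sequence_Cauchy)
  then obtain z where "zs \<longlonglongrightarrow> z" using Cauchy_convergent_iff convergent_def by blast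
  hence "(\<lambda>n. (norm (y - C (zs n)))\<^sup>2) \<longlonglongrightarrow> (norm (y - C z))\<^sup>2"
    by (intro tendsto_intros C.tendsto)
  hence "(norm (y - C z))\<^sup>2 \<le> d"
    by (rule LIMSEQ_le[OF _ LIMSEQ_inverse_real_of_nat_add]) (use zs in \<open>simp add: inverse_eq_divide\<close>)
  hence "norm (y - C z) \<le> norm (y - C z')" for z'
    using d_le[of z'] by (simp add: power2_le_imp_le)
  thus ?thesis by (rule that)
qed

lemma bounded_below_perp_range_zero_imp_surj:
  fixes C :: "'a::{real_normed_vector, complete_space} \<Rightarrow> 'b::real_inner"
  assumes "bounded_linear C" and "c > 0" and "\<And>z. c * norm z \<le> norm (C z)"
    and perp_zero: "\<And>v. (\<And>z. inner v (C z) = 0) \<Longrightarrow> v = 0"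
  shows "surj C"
proof -
  have "y \<in> range C" for y
  proof -
    obtain z where "\<And>z'. norm (y - C z) \<le> norm (y - C z')"
      using bounded_below_nearest_image_exists assms(1-3) by blast
    hence "inner (y - C z) (C v) = 0" for v
      using nearest_image_orthogonal assms(1) bounded_linear.linear by blast
    hence "y - C z = 0" by (rule perp_zero)
    thus ?thesis by auto
  qed
  thus ?thesis by auto
qed

lemma adjoint_pair_linear:
  fixes T :: "'a::real_inner \<Rightarrow> 'b::real_inner" and T' :: "'b \<Rightarrow> 'a"
  assumes adj: "\<And>x y. inner (T x) y = inner x (T' y)"
  shows "linear T'"
proof (rule linearI)
  show "T' (u + v) = T' u + T' v" for u v
    by (subst vector_eq_ldot[symmetric]) (simp add: inner_add_right flip: adj)
  show "T' (r *\<^sub>R u) = r *\<^sub>R T' u" for r u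
    by (subst vector_eq_ldot[symmetric]) (simp flip: adj)
qed

lemma symmetric_zero_form_imp_zero:
  fixes A :: "'a::real_inner \<Rightarrow> 'a"
  assumes "linear A" and sym: "\<And>x y. inner (A x) y = inner x (A y)"
    and zero_form: "\<And>x. inner (A x) x = 0"
  shows "A x = 0"
proof -
  interpret A: linear A by fact
  have "0 = inner (A (x + A x)) (x + A x)" by (rule zero_form[symmetric])
  also have "\<dots> = inner (A x) (A x) + inner (A (A x)) x"
    using zero_form[of x] zero_form[of "A x"] by (simp add: A.add inner_add_left inner_add_right)
  also have "inner (A (A x)) x = inner (A x) (A x)" by (simp add: sym inner_commute)
  finally show ?thesis by simp
qed

locale mu_commutation =
  fixes A B Bs :: "'a::real_inner \<Rightarrow> 'a" and \<mu> :: real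
  assumes adjoint: "\<And>x y. inner (B x) y = inner x (Bs y)"
    and form_nonneg: "\<And>x. 0 \<le> inner (A x) x"
    and Bs_B: "\<And>x. Bs (B x) = x - A x"
    and B_Bs: "\<And>x. B (Bs x) = x - \<mu> *\<^sub>R A x"
    and mu_pos: "0 < \<mu>" and mu_less_1: "\<mu> < 1"
begin

lemma linear_B: "linear B"
  by (rule adjoint_pair_linear[of Bs]) (metis adjoint inner_commute)

lemma linear_Bs: "linear Bs"
  by (rule adjoint_pair_linear) (rule adjoint)

lemma A_eq: "A x = x - Bs (B x)"
  by (simp add: Bs_B)

lemma linear_A: "linear A"
  unfolding A_eq[abs_def] using linear_B linear_Bs
  by (intro linear_compose_sub linear_ident) (simp_all add: linear_compose[unfolded o_def])

lemma A_symmetric: "inner (A x) y = inner x (A y)"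
  by (simp add: A_eq inner_diff_left inner_diff_right inner_commute flip: adjoint)

lemma norm_B_sq: "(norm (B x))\<^sup>2 = (norm x)\<^sup>2 - inner (A x) x"
  by (simp add: power2_norm_eq_inner adjoint Bs_B inner_diff_right inner_commute)

lemma norm_Bs_sq: "(norm (Bs w))\<^sup>2 = (norm w)\<^sup>2 - \<mu> * inner (A w) w"
  by (simp add: power2_norm_eq_inner inner_commute[of "Bs w"] flip: adjoint)
     (simp add: B_Bs inner_diff_left)

lemma form_le_norm_sq: "inner (A x) x \<le> (norm x)\<^sup>2"
  using norm_B_sq[of x] zero_le_power2[of "norm (B x)"] by linarith

lemma norm_Bs_le: "norm (Bs w) \<le> norm w"
proof -
  have "0 \<le> \<mu> * inner (A w) w" using mu_pos form_nonneg by simp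
  hence "(norm (Bs w))\<^sup>2 \<le> (norm w)\<^sup>2" by (simp add: norm_Bs_sq)
  thus ?thesis by (rule power2_le_imp_le) simp
qed

lemma bounded_linear_Bs: "bounded_linear Bs"
proof -
  interpret Bs: linear Bs by (rule linear_Bs)
  show ?thesis
    by (rule bounded_linear_intro[where K = 1]) (simp_all add: Bs.add Bs.scale norm_Bs_le)
qed

lemma Bs_bounded_below: "sqrt (1 - \<mu>) * norm w \<le> norm (Bs w)"
proof -
  have "\<mu> * inner (A w) w \<le> \<mu> * (norm w)\<^sup>2"
    using form_le_norm_sq mu_pos by (intro mult_left_mono) simp_all
  hence "(1 - \<mu>) * (norm w)\<^sup>2 \<le> (norm (Bs w))\<^sup>2"
    by (simp add: norm_Bs_sq left_diff_distrib)
  hence "sqrt ((1 - \<mu>) * (norm w)\<^sup>2) \<le> norm (Bs w)"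
    by (metis real_sqrt_abs real_sqrt_le_mono abs_norm_cancel)
  thus ?thesis by (simp add: real_sqrt_mult)
qed

lemma range_Bs_perp_zero:
  assumes "{x. B x = 0} = {0}" and "\<And>z. inner v (Bs z) = 0"
  shows "v = 0"
proof -
  have "inner (B v) (B v) = 0" using assms(2) by (simp add: adjoint)
  thus ?thesis using assms(1) by auto
qed

lemma ker_B_trivial_if_A_zero:
  assumes "\<And>x. A x = 0"
  shows "{x. B x = 0} = {0}"
proof -
  have "x = 0" if "B x = 0" for x
  proof -
    have "x = Bs (B x)" by (simp add: Bs_B assms)
    thus ?thesis using that linear_0[OF linear_Bs] by simp
  qed
  thus ?thesis using linear_0[OF linear_B] by auto
qed

lemma form_Bs: "inner (A (Bs w)) (Bs w) = \<mu> * inner (A w) w - \<mu>\<^sup>2 * (norm (A w))\<^sup>2"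
proof -
  have "(norm (B (Bs w)))\<^sup>2 = (norm w)\<^sup>2 - 2 * \<mu> * inner (A w) w + \<mu>\<^sup>2 * (norm (A w))\<^sup>2"
    unfolding B_Bs power2_norm_eq_inner
    by (simp add: inner_diff_left inner_diff_right inner_commute power2_eq_square algebra_simps)
  with norm_B_sq[of "Bs w"] norm_Bs_sq[of w] show ?thesis by simp
qed

lemma form_bound_Bs:
  assumes bound: "inner (A w) w \<le> \<rho> * (norm w)\<^sup>2"
  shows "inner (A (Bs w)) (Bs w) \<le> \<mu> * \<rho> * (norm (Bs w))\<^sup>2"
proof (cases "w = 0")
  case True
  thus ?thesis using linear_0[OF linear_Bs] linear_0[OF linear_A] by simp
next
  case False
  define a W N where "a = inner (A w) w" and "W = (norm w)\<^sup>2" and "N = (norm (A w))\<^sup>2"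
  have "W > 0" using False by (simp add: W_def)
  have "a \<le> \<rho> * W" and "a \<le> W" and "0 \<le> a"
    using bound form_le_norm_sq form_nonneg by (simp_all add: a_def W_def)
  have Cauchy_Schwarz: "a\<^sup>2 \<le> N * W"
    unfolding a_def N_def W_def power2_norm_eq_inner by (rule Cauchy_Schwarz_ineq)
  have "W * (a - \<mu> * N) \<le> W * a - \<mu> * a\<^sup>2"
    using mult_left_mono[OF Cauchy_Schwarz, of \<mu>] mu_pos by (simp add: algebra_simps)
  also have "\<dots> = W * (\<rho> * (W - \<mu> * a)) - (\<rho> * W - a) * (W - \<mu> * a)"
    by (simp add: algebra_simps power2_eq_square)
  also have "\<dots> \<le> W * (\<rho> * (W - \<mu> * a))"
  proof -
    have "\<mu> * a \<le> a" using mult_right_mono[of \<mu> 1 a] mu_less_1 \<open>0 \<le> a\<close> by simp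
    hence "0 \<le> (\<rho> * W - a) * (W - \<mu> * a)"
      using \<open>a \<le> \<rho> * W\<close> \<open>a \<le> W\<close> by (intro mult_nonneg_nonneg) linarith+
    thus ?thesis by simp
  qed
  finally have "a - \<mu> * N \<le> \<rho> * (W - \<mu> * a)"
    using \<open>W > 0\<close> by simp
  hence "\<mu> * (a - \<mu> * N) \<le> \<mu> * (\<rho> * (W - \<mu> * a))"
    using mu_pos by simp
  thus ?thesis
    unfolding form_Bs norm_Bs_sq a_def W_def N_def by (simp add: algebra_simps power2_eq_square)
qed

lemma form_le_power_if_surj:
  assumes "surj Bs"
  shows "inner (A x) x \<le> \<mu> ^ n * (norm x)\<^sup>2"
proof (induction n arbitrary: x)
  case 0
  show ?case using form_le_norm_sq by simp
next
  case (Suc n)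
  obtain w where "x = Bs w" using \<open>surj Bs\<close> by (metis surjD)
  thus ?case using form_bound_Bs[OF Suc.IH] by simp
qed

lemma A_zero_if_surj:
  assumes "surj Bs"
  shows "A x = 0"
proof -
  have "inner (A y) y = 0" for y
  proof -
    have "(\<lambda>n. \<mu> ^ n * (norm y)\<^sup>2) \<longlonglongrightarrow> 0"
      using mu_pos mu_less_1 by (intro tendsto_mult_left_zero LIMSEQ_power_zero) simp
    hence "inner (A y) y \<le> 0"
      using form_le_power_if_surj[OF assms] by (intro LIMSEQ_le_const) auto
    thus ?thesis using form_nonneg[of y] by simp
  qed
  thus ?thesis by (rule symmetric_zero_form_imp_zero[OF linear_A A_symmetric])
qed

end

theorem lemma1p5:
  fixes J A B Bs :: "'a::{real_inner, complete_space} \<Rightarrow> 'a" and \<mu> :: real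
  assumes "complex_structure J"
    and "bounded_op J A" and "bounded_op J B"
    and "is_adjoint J B Bs"
    and "positive_op J A"
    and "0 < \<mu>" and "\<mu> < 1"
    and "\<forall>x. B (Bs x) - Bs (B x) = (1 - \<mu>) *\<^sub>R A x"
    and "\<forall>x. A x + Bs (B x) = x"
  shows "{x. B x = 0} = {0} \<longleftrightarrow> (\<forall>x. A x = 0)"
proof -
  have Bs_B: "Bs (B x) = x - A x" for x
    using assms(9) by (metis add_diff_cancel_left')
  interpret mu_commutation A B Bs \<mu>
  proof
    show "inner (B x) y = inner x (Bs y)" for x y
      using arg_cong[OF assms(4)[unfolded is_adjoint_def, rule_format, of x y], of Re]
      by (simp add: cinner_def)
    show "0 \<le> inner (A x) x" for x
      using assms(5) by (simp add: positive_op_def cinner_def)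
    show "B (Bs x) = x - \<mu> *\<^sub>R A x" for x
      using assms(8) Bs_B by (simp add: algebra_simps)
  qed (use Bs_B assms(6,7) in auto)
  show ?thesis
  proof
    assume ker_trivial: "{x. B x = 0} = {0}"
    have "sqrt (1 - \<mu>) > 0" using mu_less_1 by simp
    hence "surj Bs"
      using bounded_below_perp_range_zero_imp_surj[OF bounded_linear_Bs _ Bs_bounded_below]
        range_Bs_perp_zero[OF ker_trivial] by blast
    thus "\<forall>x. A x = 0" by (simp add: A_zero_if_surj)
  qed (simp add: ker_B_trivial_if_A_zero)
qed

end
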